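(* Let $X,Y$ be Banach spaces, $T:X\to Y$ a bounded linear operator, $q\ge 2$ and $c>0$. Then $T$ is uniformly $q$-convex with constant $c$ if and only if $T$ has strong martingale cotype $q$ with constant $c$.
   Context: Dyadic setting: for $k=0,1,2,\dots$, $\mathcal F_k$ is the $\sigma$-algebra on $[0,1)$ generated by the dyadic intervals $[i/2^k,(i+1)/2^k)$, $i=0,\dots,2^k-1$ (so $\mathcal F_0$ is trivial), with Lebesgue measure. A sequence $d_0,d_1,\dots,d_n$ of $X$-valued functions on $[0,1)$ is a sequence of differences of a dyadic martingale if each $d_k$ is $\mathcal F_k$-measurable and $\mathbb E(d_k\mid\mathcal F_{k-1})=0$ for $k\ge1$ (so $d_0$ is constant). For $f:[0,1)\to X$, $\|f|L_q\|=(\int_0^1\|f(t)\|^q\,dt)^{1/q}$. $T$ is uniformly $q$-convex with constant $c$ if for all $x_+,x_-\in X$: $\left\|\frac{Tx_+-Tx_-}{2}\right\|\le c\left(\frac{\|x_+\|^q+\|x_-\|^q}{2}-\left\|\frac{x_++x_-}{2}\right\|^q\right)^{1/q}$. $T$ has strong martingale cotype $q$ with constant $c$ if for all $n\in\mathbb N$ and all sequences $d_0,\dots,d_n$ of $X$-valued differences of dyadic martingales with $d_0\equiv x$: $\left(\|x\|^q+c^{-q}\sum_{k=1}^n\|Td_k|L_q\|^q\right)^{1/q}\le\left\|\sum_{k=0}^n d_k\Big|L_q\right\|$. *)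

theory Defs
  imports "HOL-Analysis.Analysis"
begin

definition dyadic_intervals :: "nat \<Rightarrow> real set set" where
  "dyadic_intervals k = {{real i / 2^k ..< real (i+1) / 2^k} | i. i < 2^k}"

definition dyF :: "nat \<Rightarrow> real measure" where
  "dyF k = sigma {0..<1} (dyadic_intervals k)"

definition Lq_norm :: "real \<Rightarrow> (real \<Rightarrow> 'a::real_normed_vector) \<Rightarrow> real" where
  "Lq_norm q f = (LINT t:{0..<1}|lborel. norm (f t) powr q) powr (1/q)"

text \<open>d_0,...,d_n is a sequence of differences of a dyadic martingale:
  each d_k is F_k-measurable, and E(d_k | F_{k-1}) = 0 for k >= 1, i.e. the
  integral of d_k over every set of F_{k-1} vanishes. Since the library's Bochner
  integral requires a second-countable codomain, the vanishing of the vector integral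
  is expressed weakly (via all bounded linear functionals, equivalent by Hahn-Banach).\<close>
definition dyadic_mart_diff :: "nat \<Rightarrow> (nat \<Rightarrow> real \<Rightarrow> 'a::banach) \<Rightarrow> bool" where
  "dyadic_mart_diff n d \<longleftrightarrow>
     (\<forall>k\<le>n. d k \<in> borel_measurable (dyF k)) \<and>
     (\<forall>k\<in>{1..n}. \<forall>A\<in>sets (dyF (k-1)). (\<forall>\<phi>::'a \<Rightarrow> real. bounded_linear \<phi> \<longrightarrow> (LINT t:A|lborel. \<phi> (d k t)) = 0))"

definition uniformly_q_convex ::
  "('a::banach \<Rightarrow> 'b::banach) \<Rightarrow> real \<Rightarrow> real \<Rightarrow> bool" where
  "uniformly_q_convex T q c \<longleftrightarrow>
     (\<forall>xp xm. norm ((1/2) *\<^sub>R (T xp - T xm)) \<le>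
        c * ((norm xp powr q + norm xm powr q) / 2 - norm ((1/2) *\<^sub>R (xp + xm)) powr q) powr (1/q))"

definition strong_mart_cotype ::
  "('a::banach \<Rightarrow> 'b::banach) \<Rightarrow> real \<Rightarrow> real \<Rightarrow> bool" where
  "strong_mart_cotype T q c \<longleftrightarrow>
     (\<forall>n x d. dyadic_mart_diff n d \<and> (\<forall>t\<in>{0..<1}. d 0 t = x) \<longrightarrow>
        (norm x powr q + c powr (-q) * (\<Sum>k\<in>{1..n}. Lq_norm q (\<lambda>t. T (d k t)) powr q)) powr (1/q)
          \<le> Lq_norm q (\<lambda>t. \<Sum>k\<le>n. d k t))"

end

theory Submission
  imports Defs
begin

text \<open>Write \<open>x\<^sub>+ = x + y\<close> and \<open>x\<^sub>- = x - y\<close>. Uniform q-convexity of \<open>T\<close> then says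
  \<open>\<parallel>T y\<parallel>^q \<le> c^q ((\<parallel>x + y\<parallel>^q + \<parallel>x - y\<parallel>^q) / 2 - \<parallel>x\<parallel>^q)\<close>.
  Let \<open>F_k\<close> be the partial sums of a dyadic martingale. On each level-\<open>k\<close> dyadic interval
  \<open>F_k\<close> is a constant \<open>x\<close>, while \<open>d_(k+1)\<close> takes opposite values \<open>\<plusminus>y\<close> on its two halves.
  Averaging the inequality over all such pairs gives
  \<open>c^-q \<parallel>T d_(k+1)\<parallel>_q^q \<le> \<parallel>F_(k+1)\<parallel>_q^q - \<parallel>F_k\<parallel>_q^q\<close>, and strong martingale cotype
  follows by telescoping. Conversely, strong cotype applied to the one-step martingale
  \<open>x, \<plusminus>y\<close> gives back the pointwise inequality. Since the martingale condition is imposed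
  only through bounded linear functionals, a Hahn-Banach argument is needed to see that
  \<open>d_(k+1)\<close> really takes opposite values.\<close>

section \<open>Norming functionals\<close>

text \<open>Partial functionals are represented by their graphs, so that Zorn's lemma can be
  applied to set inclusion.\<close>

definition norm_dominated_graph :: "('a::real_normed_vector \<times> real) set \<Rightarrow> bool" where
  "norm_dominated_graph G \<longleftrightarrow>
     (\<forall>x a b. (x, a) \<in> G \<longrightarrow> (x, b) \<in> G \<longrightarrow> a = b) \<and>
     (\<forall>x a y b. (x, a) \<in> G \<longrightarrow> (y, b) \<in> G \<longrightarrow> (x + y, a + b) \<in> G) \<and>
     (\<forall>x a r. (x, a) \<in> G \<longrightarrow> (r *\<^sub>R x, r * a) \<in> G) \<and>
     (\<forall>x a. (x, a) \<in> G \<longrightarrow> a \<le> norm x)"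

lemma norm_dominated_graph_line: "norm_dominated_graph {(r *\<^sub>R z, r * norm z) | r. True}"
  (is "norm_dominated_graph ?L")
  unfolding norm_dominated_graph_def
proof (intro conjI allI impI)
  fix x a b assume "(x, a) \<in> ?L" "(x, b) \<in> ?L"
  then obtain r s where "x = r *\<^sub>R z" "a = r * norm z" "x = s *\<^sub>R z" "b = s * norm z" by blast
  then show "a = b" by (metis norm_zero mult_zero_right scaleR_cancel_right)
next
  fix x a y b assume "(x, a) \<in> ?L" "(y, b) \<in> ?L"
  then obtain r s where "x = r *\<^sub>R z" "a = r * norm z" "y = s *\<^sub>R z" "b = s * norm z" by blast
  then show "(x + y, a + b) \<in> ?L" by (auto intro!: exI[of _ "r + s"] simp: algebra_simps)
next
  fix x a t assume "(x, a) \<in> ?L"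
  then obtain r where "x = r *\<^sub>R z" "a = r * norm z" by blast
  then show "(t *\<^sub>R x, t * a) \<in> ?L" by (auto intro!: exI[of _ "t * r"])
next
  fix x a assume "(x, a) \<in> ?L"
  then show "a \<le> norm x" by (auto intro!: mult_right_mono)
qed

lemma norm_dominated_graph_Union:
  assumes chain: "chain\<^sub>\<subseteq> C" and graphs: "\<And>G. G \<in> C \<Longrightarrow> norm_dominated_graph G"
  shows "norm_dominated_graph (\<Union>C)"
proof -
  have common: "\<exists>G\<in>C. p \<in> G \<and> p' \<in> G" if "p \<in> \<Union>C" "p' \<in> \<Union>C" for p p'
    using that chain unfolding chain_subset_def by blast
  show ?thesis
    unfolding norm_dominated_graph_def
  proof (intro conjI allI impI)
    fix x a b assume "(x, a) \<in> \<Union>C" "(x, b) \<in> \<Union>C"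
    then obtain G where "G \<in> C" "(x, a) \<in> G" "(x, b) \<in> G" using common by blast
    then show "a = b" using graphs unfolding norm_dominated_graph_def by blast
  next
    fix x a y b assume "(x, a) \<in> \<Union>C" "(y, b) \<in> \<Union>C"
    then obtain G where "G \<in> C" "(x, a) \<in> G" "(y, b) \<in> G" using common by blast
    then show "(x + y, a + b) \<in> \<Union>C" using graphs unfolding norm_dominated_graph_def by blast
  next
    fix x a r assume "(x, a) \<in> \<Union>C"
    then show "(r *\<^sub>R x, r * a) \<in> \<Union>C" using graphs unfolding norm_dominated_graph_def by blast
  next
    fix x a assume "(x, a) \<in> \<Union>C"
    then show "a \<le> norm x" using graphs unfolding norm_dominated_graph_def by blast
  qed
qed

lemma norm_dominated_graph_extension_bounds:
  assumes G: "norm_dominated_graph G" and "G \<noteq> {}"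
  obtains a where "\<And>u g. (u, g) \<in> G \<Longrightarrow> g - norm (u - x0) \<le> a"
    and "\<And>u g. (u, g) \<in> G \<Longrightarrow> a \<le> norm (u + x0) - g"
proof -
  have lower_le_upper: "g - norm (u - x0) \<le> norm (s + x0) - f"
    if "(s, f) \<in> G" "(u, g) \<in> G" for s f u g
  proof -
    have "f + g \<le> norm (s + u)" using G that unfolding norm_dominated_graph_def by blast
    also have "\<dots> \<le> norm (s + x0) + norm (u - x0)"
      using norm_triangle_ineq[of "s + x0" "u - x0"] by simp
    finally show ?thesis by simp
  qed
  define L where "L = {g - norm (u - x0) | u g. (u, g) \<in> G}"
  obtain s f where sf: "(s, f) \<in> G" using \<open>G \<noteq> {}\<close> by auto
  have "L \<noteq> {}" using sf unfolding L_def by blast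
  moreover have "bdd_above L" unfolding L_def bdd_above_def using lower_le_upper[OF sf] by blast
  ultimately show ?thesis
    using lower_le_upper by (intro that[of "Sup L"] cSup_upper cSup_least) (auto simp: L_def)
qed

lemma norm_dominated_graph_extension_le_norm:
  assumes G: "norm_dominated_graph G" and "(s, f) \<in> G"
    and lower: "\<And>u g. (u, g) \<in> G \<Longrightarrow> g - norm (u - x0) \<le> a"
    and upper: "\<And>u g. (u, g) \<in> G \<Longrightarrow> a \<le> norm (u + x0) - g"
  shows "f + t * a \<le> norm (s + t *\<^sub>R x0)"
proof -
  have scaled: "(r *\<^sub>R s, r * f) \<in> G" for r
    using G \<open>(s, f) \<in> G\<close> unfolding norm_dominated_graph_def by blast
  consider "t = 0" | "t > 0" | "t < 0" by linarith
  then show ?thesis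
  proof cases
    case 1
    then show ?thesis using G \<open>(s, f) \<in> G\<close> unfolding norm_dominated_graph_def by simp
  next
    case 2
    have "s + t *\<^sub>R x0 = t *\<^sub>R ((1 / t) *\<^sub>R s + x0)" using 2 by (simp add: algebra_simps)
    then have "norm (s + t *\<^sub>R x0) = t * norm ((1 / t) *\<^sub>R s + x0)" using 2 by simp
    moreover have "t * a \<le> t * (norm ((1 / t) *\<^sub>R s + x0) - (1 / t) * f)"
      using upper[OF scaled[of "1 / t"]] 2 by (intro mult_left_mono) auto
    ultimately show ?thesis using 2 by (simp add: algebra_simps)
  next
    case 3
    have "s + t *\<^sub>R x0 = (- t) *\<^sub>R ((- 1 / t) *\<^sub>R s - x0)" using 3 by (simp add: algebra_simps)
    then have "norm (s + t *\<^sub>R x0) = (- t) * norm ((- 1 / t) *\<^sub>R s - x0)" using 3 by simp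
    moreover have "(- t) * ((- 1 / t) * f - norm ((- 1 / t) *\<^sub>R s - x0)) \<le> (- t) * a"
      using lower[OF scaled[of "- 1 / t"]] 3 by (intro mult_left_mono) auto
    ultimately show ?thesis using 3 by (simp add: algebra_simps)
  qed
qed

lemma norm_dominated_graph_extend:
  assumes G: "norm_dominated_graph G" and x0: "x0 \<notin> fst ` G"
    and lower: "\<And>u g. (u, g) \<in> G \<Longrightarrow> g - norm (u - x0) \<le> a"
    and upper: "\<And>u g. (u, g) \<in> G \<Longrightarrow> a \<le> norm (u + x0) - g"
  shows "norm_dominated_graph {(s + t *\<^sub>R x0, f + t * a) | s f t. (s, f) \<in> G}"
    (is "norm_dominated_graph ?G'")
proof -
  have functional: "\<And>x a b. (x, a) \<in> G \<Longrightarrow> (x, b) \<in> G \<Longrightarrow> a = b"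
    and add: "\<And>x y a b. (x, a) \<in> G \<Longrightarrow> (y, b) \<in> G \<Longrightarrow> (x + y, a + b) \<in> G"
    and scale: "\<And>x a r. (x, a) \<in> G \<Longrightarrow> (r *\<^sub>R x, r * a) \<in> G"
    using G unfolding norm_dominated_graph_def by blast+
  show ?thesis
    unfolding norm_dominated_graph_def
  proof (intro conjI allI impI)
    fix x b b' assume "(x, b) \<in> ?G'" "(x, b') \<in> ?G'"
    then obtain s f t s' f' t' where sf: "(s, f) \<in> G" "(s', f') \<in> G"
      and x: "x = s + t *\<^sub>R x0" "x = s' + t' *\<^sub>R x0" and b: "b = f + t * a" "b' = f' + t' * a"
      by blast
    have "t = t'"
    proof (rule ccontr)
      assume "t \<noteq> t'"
      have "((1 / (t' - t)) *\<^sub>R (s + (-1) *\<^sub>R s'), (1 / (t' - t)) * (f + (-1) * f')) \<in> G"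
        using sf by (intro scale add) auto
      moreover have "(1 / (t' - t)) *\<^sub>R (s + (-1) *\<^sub>R s') = x0"
      proof -
        have "s + (-1) *\<^sub>R s' = (t' - t) *\<^sub>R x0" using x by (simp add: algebra_simps)
        then show ?thesis using \<open>t \<noteq> t'\<close> by simp
      qed
      ultimately show False using x0 by force
    qed
    then show "b = b'" using x b sf functional by auto
  next
    fix x b y b' assume "(x, b) \<in> ?G'" "(y, b') \<in> ?G'"
    then obtain s f t s' f' t' where "(s, f) \<in> G" "(s', f') \<in> G"
      and "x = s + t *\<^sub>R x0" "b = f + t * a" "y = s' + t' *\<^sub>R x0" "b' = f' + t' * a"
      by blast
    moreover have "x + y = (s + s') + (t + t') *\<^sub>R x0" "b + b' = (f + f') + (t + t') * a"
      using calculation by (simp_all add: algebra_simps)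
    ultimately show "(x + y, b + b') \<in> ?G'" using add by blast
  next
    fix x b r assume "(x, b) \<in> ?G'"
    then obtain s f t where "(s, f) \<in> G" "x = s + t *\<^sub>R x0" "b = f + t * a" by blast
    moreover have "r *\<^sub>R x = r *\<^sub>R s + (r * t) *\<^sub>R x0" "r * b = r * f + (r * t) * a"
      using calculation by (simp_all add: algebra_simps)
    ultimately show "(r *\<^sub>R x, r * b) \<in> ?G'" using scale by blast
  next
    fix x b assume "(x, b) \<in> ?G'"
    then show "b \<le> norm x"
      using norm_dominated_graph_extension_le_norm[OF G _ lower upper] by blast
  qed
qed

lemma exists_norming_functional:
  fixes z :: "'a::real_normed_vector"
  obtains \<phi> :: "'a \<Rightarrow> real" where "bounded_linear \<phi>" "\<phi> z = norm z"
proof -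
  let ?A = "{G. norm_dominated_graph G \<and> (z, norm z) \<in> G}"
  have "\<exists>M\<in>?A. \<forall>X\<in>?A. M \<subseteq> X \<longrightarrow> X = M"
  proof (rule Zorn_Lemma2, intro ballI)
    fix C assume "C \<in> chains ?A"
    then have "chain\<^sub>\<subseteq> C" "C \<subseteq> ?A" by (auto simp: chains_def)
    show "\<exists>U\<in>?A. \<forall>X\<in>C. X \<subseteq> U"
    proof (cases "C = {}")
      case True
      have "(z, norm z) \<in> {(r *\<^sub>R z, r * norm z) | r. True}" by (auto intro!: exI[of _ 1])
      then show ?thesis using True norm_dominated_graph_line by blast
    next
      case False
      then have "(z, norm z) \<in> \<Union>C" using \<open>C \<subseteq> ?A\<close> by blast
      then show ?thesis using norm_dominated_graph_Union[OF \<open>chain\<^sub>\<subseteq> C\<close>] \<open>C \<subseteq> ?A\<close> by blast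
    qed
  qed
  then obtain M where M: "norm_dominated_graph M" "(z, norm z) \<in> M"
    and maximal: "\<And>X. norm_dominated_graph X \<Longrightarrow> (z, norm z) \<in> X \<Longrightarrow> M \<subseteq> X \<Longrightarrow> X = M"
    by blast
  have total: "x \<in> fst ` M" for x
  proof (rule ccontr)
    assume x: "x \<notin> fst ` M"
    obtain a where lower: "\<And>u g. (u, g) \<in> M \<Longrightarrow> g - norm (u - x) \<le> a"
      and upper: "\<And>u g. (u, g) \<in> M \<Longrightarrow> a \<le> norm (u + x) - g"
      using norm_dominated_graph_extension_bounds[OF M(1)] M(2) by blast
    let ?M' = "{(s + t *\<^sub>R x, f + t * a) | s f t. (s, f) \<in> M}"
    have "(s, f) \<in> ?M'" if "(s, f) \<in> M" for s f
      using that by (intro CollectI exI[of _ s] exI[of _ f] exI[of _ 0]) simp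
    then have "M \<subseteq> ?M'" by auto
    then have "?M' = M"
      using maximal[OF norm_dominated_graph_extend[OF M(1) x lower upper]] M(2) by blast
    moreover have "(0, 0) \<in> M"
      using M unfolding norm_dominated_graph_def by (metis mult_zero_left scaleR_zero_left)
    then have "(x, a) \<in> ?M'" by (intro CollectI exI[of _ 0] exI[of _ 0] exI[of _ 1]) simp
    ultimately show False using x by force
  qed
  define \<phi> where "\<phi> x = (THE a. (x, a) \<in> M)" for x
  have graph: "(x, a) \<in> M \<longleftrightarrow> \<phi> x = a" for x a
  proof -
    have "\<exists>!a. (x, a) \<in> M" using total[of x] M(1) unfolding norm_dominated_graph_def by force
    then show ?thesis unfolding \<phi>_def by (metis theI')
  qed
  have "bounded_linear \<phi>"
  proof (rule bounded_linear_intro[where K = 1])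
    fix x y show "\<phi> (x + y) = \<phi> x + \<phi> y"
      using M(1) graph unfolding norm_dominated_graph_def by blast
  next
    fix r x show "\<phi> (r *\<^sub>R x) = r *\<^sub>R \<phi> x"
      using M(1) graph unfolding norm_dominated_graph_def by simp
  next
    fix x
    have "\<phi> x \<le> norm x" "- \<phi> x \<le> norm (- x)"
      using M(1) graph unfolding norm_dominated_graph_def
      by (metis, metis mult_minus1 scaleR_minus1_left)
    then show "norm (\<phi> x) \<le> norm x * 1" by simp
  qed
  moreover have "\<phi> z = norm z" using graph M(2) by blast
  ultimately show ?thesis using that by blast
qed

section \<open>Dyadic step functions\<close>

definition dyadic_index :: "nat \<Rightarrow> real \<Rightarrow> nat" where
  "dyadic_index m t = nat \<lfloor>t * 2 ^ m\<rfloor>"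

definition dyadic_point :: "nat \<Rightarrow> nat \<Rightarrow> real" where
  "dyadic_point m i = real i / 2 ^ m"

definition dyadic_interval :: "nat \<Rightarrow> nat \<Rightarrow> real set" where
  "dyadic_interval m i = {dyadic_point m i ..< dyadic_point m (i + 1)}"

lemma mem_dyadic_interval_iff:
  assumes "t \<ge> 0"
  shows "t \<in> dyadic_interval m i \<longleftrightarrow> dyadic_index m t = i"
proof -
  have "t \<in> dyadic_interval m i \<longleftrightarrow> real i \<le> t * 2 ^ m \<and> t * 2 ^ m < real i + 1"
    unfolding dyadic_interval_def dyadic_point_def by (simp add: field_simps)
  also have "\<dots> \<longleftrightarrow> \<lfloor>t * 2 ^ m\<rfloor> = int i" by (simp add: floor_eq_iff)
  also have "\<dots> \<longleftrightarrow> dyadic_index m t = i" unfolding dyadic_index_def using assms by auto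
  finally show ?thesis .
qed

lemma dyadic_interval_subset:
  assumes "i < 2 ^ m"
  shows "dyadic_interval m i \<subseteq> {0..<1}"
proof -
  have "real (i + 1) \<le> 2 ^ m"
    using assms by (metis Suc_eq_plus1 Suc_leI of_nat_le_iff of_nat_numeral of_nat_power)
  then show ?thesis unfolding dyadic_interval_def dyadic_point_def by auto
qed

lemma dyadic_index_less:
  assumes "t \<in> {0..<1}"
  shows "dyadic_index m t < 2 ^ m"
proof -
  have "t * 2 ^ m < 2 ^ m" using assms by simp
  then have "\<lfloor>t * 2 ^ m\<rfloor> < 2 ^ m" by (simp add: floor_less_iff)
  then show ?thesis unfolding dyadic_index_def using assms by (simp add: nat_less_iff)
qed

lemma dyadic_index_point [simp]: "dyadic_index m (dyadic_point m i) = i"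
  unfolding dyadic_index_def dyadic_point_def by simp

lemma dyadic_point_nonneg [simp]: "0 \<le> dyadic_point m i"
  unfolding dyadic_point_def by simp

lemma dyadic_point_in_unit: "i < 2 ^ m \<Longrightarrow> dyadic_point m i \<in> {0..<1}"
  unfolding dyadic_point_def by (simp add: divide_less_eq_1)

lemma dyadic_index_coarsen:
  assumes "t \<ge> 0" "l \<le> m"
  shows "dyadic_index l t = dyadic_index m t div 2 ^ (m - l)"
proof -
  have "(2::real) ^ m = 2 ^ l * 2 ^ (m - l)" using assms(2) by (simp flip: power_add)
  then have "t * 2 ^ l = (t * 2 ^ m) / real_of_int (2 ^ (m - l))" by simp
  then have "\<lfloor>t * 2 ^ l\<rfloor> = \<lfloor>t * 2 ^ m\<rfloor> div 2 ^ (m - l)"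
    using floor_divide_real_eq_div[of "2 ^ (m - l)" "t * 2 ^ m"] by simp
  then show ?thesis
    unfolding dyadic_index_def using assms by (simp add: nat_div_distrib nat_power_eq)
qed

lemma dyadic_intervals_eq: "dyadic_intervals m = dyadic_interval m ` {..<2 ^ m}"
  unfolding dyadic_intervals_def dyadic_interval_def dyadic_point_def by auto

lemma space_dyF: "space (dyF m) = {0..<1}"
  and sets_dyF: "sets (dyF m) = sigma_sets {0..<1} (dyadic_intervals m)"
proof -
  have "dyadic_intervals m \<subseteq> Pow {0..<1}"
    unfolding dyadic_intervals_eq using dyadic_interval_subset by auto
  then show "space (dyF m) = {0..<1}" "sets (dyF m) = sigma_sets {0..<1} (dyadic_intervals m)"
    unfolding dyF_def by (simp_all add: space_measure_of sets_measure_of)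
qed

lemma dyadic_interval_in_dyF: "i < 2 ^ m \<Longrightarrow> dyadic_interval m i \<in> sets (dyF m)"
  unfolding sets_dyF dyadic_intervals_eq by auto

lemma sets_dyF_0: "sets (dyF 0) = {{}, {0..<1}}"
proof -
  have "dyadic_intervals 0 = {{0..<1}}"
    unfolding dyadic_intervals_eq by (auto simp: dyadic_interval_def dyadic_point_def lessThan_Suc)
  then show ?thesis unfolding sets_dyF by simp
qed

lemma dyF_sets_respect_index:
  assumes "A \<in> sets (dyF m)" "s \<in> {0..<1}" "t \<in> {0..<1}" "dyadic_index m s = dyadic_index m t"
  shows "s \<in> A \<longleftrightarrow> t \<in> A"
  using assms(1) unfolding sets_dyF
proof (induction rule: sigma_sets.induct)
  case (Basic a)
  then show ?case using assms(2-4) mem_dyadic_interval_iff unfolding dyadic_intervals_eq by auto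
qed (use assms(2,3) in auto)

definition dyadic_step :: "nat \<Rightarrow> (real \<Rightarrow> 'a) \<Rightarrow> bool" where
  "dyadic_step m g \<longleftrightarrow>
     (\<forall>s\<in>{0..<1}. \<forall>t\<in>{0..<1}. dyadic_index m s = dyadic_index m t \<longrightarrow> g s = g t)"

lemma dyadic_step_if_measurable:
  fixes g :: "real \<Rightarrow> 'a::metric_space"
  assumes "g \<in> borel_measurable (dyF m)"
  shows "dyadic_step m g"
  unfolding dyadic_step_def
proof (intro ballI impI)
  fix s t assume st: "s \<in> {0..<1}" "t \<in> {0..<1}" "dyadic_index m s = dyadic_index m t"
  have "g -` {g s} \<inter> {0..<1} \<in> sets (dyF m)"
    using measurable_sets[OF assms, of "{g s}"] by (simp add: space_dyF)
  from dyF_sets_respect_index[OF this st] st show "g s = g t" by simp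
qed

lemma dyadic_step_mono: "dyadic_step l g \<Longrightarrow> l \<le> m \<Longrightarrow> dyadic_step m g"
  unfolding dyadic_step_def using dyadic_index_coarsen by (metis atLeastLessThan_iff)

lemma dyadic_step_comp: "dyadic_step m g \<Longrightarrow> dyadic_step m (\<lambda>t. h (g t))"
  unfolding dyadic_step_def by metis

lemma dyadic_step_comp2:
  "dyadic_step m f \<Longrightarrow> dyadic_step m g \<Longrightarrow> dyadic_step m (\<lambda>t. h (f t) (g t))"
  unfolding dyadic_step_def by metis

lemma dyadic_step_sum:
  "(\<And>l. l \<in> L \<Longrightarrow> dyadic_step m (f l)) \<Longrightarrow> dyadic_step m (\<lambda>t. \<Sum>l\<in>L. f l t)"
  unfolding dyadic_step_def by (metis (mono_tags, lifting) sum.cong)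

lemma dyadic_step_indicator:
  assumes "l \<le> m"
  shows "dyadic_step m (indicator (dyadic_interval l j))"
  unfolding dyadic_step_def
proof (intro ballI impI)
  fix s t :: real assume "s \<in> {0..<1}" "t \<in> {0..<1}" "dyadic_index m s = dyadic_index m t"
  then have "dyadic_index l s = dyadic_index l t" using dyadic_index_coarsen[OF _ assms] by simp
  then show "indicator (dyadic_interval l j) s = indicator (dyadic_interval l j) t"
    using \<open>s \<in> {0..<1}\<close> \<open>t \<in> {0..<1}\<close> by (simp add: indicator_def mem_dyadic_interval_iff)
qed

lemma dyadic_index_right_child: "dyadic_index m (dyadic_point (Suc m) (2 * j + 1)) = j"
proof -
  have "dyadic_index m (dyadic_point (Suc m) (2 * j + 1))
      = dyadic_index (Suc m) (dyadic_point (Suc m) (2 * j + 1)) div 2 ^ (Suc m - m)"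
    by (rule dyadic_index_coarsen) (auto simp: dyadic_point_def)
  then show ?thesis by simp
qed

lemma dyadic_point_left_child: "dyadic_point (Suc m) (2 * j) = dyadic_point m j"
  unfolding dyadic_point_def by simp

lemma emeasure_dyadic_interval: "emeasure lborel (dyadic_interval m i) = ennreal (1 / 2 ^ m)"
  unfolding dyadic_interval_def dyadic_point_def by (simp add: divide_right_mono field_simps)

lemma integral_dyadic_step:
  fixes g :: "real \<Rightarrow> real"
  assumes "dyadic_step m g"
  shows "(LINT t:{0..<1}|lborel. g t) = (\<Sum>i<2 ^ m. g (dyadic_point m i)) / 2 ^ m"
proof -
  have step: "indicator {0..<1} t * g t
      = (\<Sum>i<2 ^ m. g (dyadic_point m i) * indicator (dyadic_interval m i) t)" for t
  proof (cases "t \<in> {0..<1}")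
    case True
    then have "g (dyadic_point m (dyadic_index m t)) = g t"
      using assms dyadic_point_in_unit[OF dyadic_index_less[OF True]] True
      unfolding dyadic_step_def by (metis dyadic_index_point)
    then show ?thesis
      using True dyadic_index_less[OF True, of m]
      by (simp add: indicator_def mem_dyadic_interval_iff if_distrib cong: if_cong)
  next
    case False
    have "t \<notin> dyadic_interval m i" if "i < 2 ^ m" for i
      using False dyadic_interval_subset[OF that] by blast
    then show ?thesis using False by (simp add: indicator_def)
  qed
  have "(LINT t:{0..<1}|lborel. g t)
      = (LINT t|lborel. (\<Sum>i<2 ^ m. g (dyadic_point m i) * indicator (dyadic_interval m i) t))"
    unfolding set_lebesgue_integral_def using step by simp
  also have "\<dots> = (\<Sum>i<2 ^ m. g (dyadic_point m i) * measure lborel (dyadic_interval m i))"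
    by (subst Bochner_Integration.integral_sum)
      (auto intro!: integrable_real_indicator simp: emeasure_dyadic_interval,
       auto simp: dyadic_interval_def)
  also have "\<dots> = (\<Sum>i<2 ^ m. g (dyadic_point m i) / 2 ^ m)"
    by (simp add: measure_def emeasure_dyadic_interval)
  finally show ?thesis by (simp add: sum_divide_distrib)
qed

lemma integral_dyadic_step_Suc:
  fixes g :: "real \<Rightarrow> real"
  assumes "dyadic_step (Suc m) g"
  shows "(LINT t:{0..<1}|lborel. g t)
    = (\<Sum>j<2 ^ m. g (dyadic_point m j) + g (dyadic_point (Suc m) (2 * j + 1))) / 2 ^ Suc m"
  using sum_split_even_odd[where f = "\<lambda>i. g (dyadic_point (Suc m) i)"
      and g = "\<lambda>i. g (dyadic_point (Suc m) i)" and n = "2 ^ m"]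
  unfolding integral_dyadic_step[OF assms] by (simp add: sum.distrib dyadic_point_left_child)

lemma dyadic_children_opposite:
  fixes g :: "real \<Rightarrow> 'a::real_normed_vector"
  assumes g: "dyadic_step (Suc m) g" and j: "j < 2 ^ m"
    and mean_zero: "\<And>\<phi>::'a \<Rightarrow> real. bounded_linear \<phi> \<Longrightarrow>
      (LINT t:dyadic_interval m j|lborel. \<phi> (g t)) = 0"
  shows "g (dyadic_point (Suc m) (2 * j + 1)) = - g (dyadic_point m j)"
proof -
  let ?l = "dyadic_point m" and ?r = "\<lambda>i. dyadic_point (Suc m) (2 * i + 1)"
  have children: "?l i \<in> dyadic_interval m j \<longleftrightarrow> i = j" "?r i \<in> dyadic_interval m j \<longleftrightarrow> i = j" for i
    using dyadic_index_right_child[of m i] by (simp_all add: mem_dyadic_interval_iff)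
  have "\<phi> (g (?l j) + g (?r j)) = 0" if \<phi>: "bounded_linear \<phi>" for \<phi> :: "'a \<Rightarrow> real"
  proof -
    define h where "h t = indicator (dyadic_interval m j) t * \<phi> (g t)" for t
    have "dyadic_step (Suc m) h"
      unfolding h_def
      by (intro dyadic_step_comp2[where h = "(*)"] dyadic_step_indicator dyadic_step_comp[OF g])
        simp
    have "0 = (LINT t:dyadic_interval m j|lborel. \<phi> (g t))" using mean_zero[OF \<phi>] by simp
    also have "\<dots> = (LINT t:{0..<1}|lborel. h t)"
      using dyadic_interval_subset[OF j] unfolding set_lebesgue_integral_def h_def
      by (intro Bochner_Integration.integral_cong) (auto simp: indicator_def)
    also have "\<dots> = (\<Sum>i<2 ^ m. if i = j then \<phi> (g (?l i)) + \<phi> (g (?r i)) else 0) / 2 ^ Suc m"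
      unfolding integral_dyadic_step_Suc[OF \<open>dyadic_step (Suc m) h\<close>]
      unfolding h_def indicator_def children
      by (intro arg_cong[where f = "\<lambda>x. x / 2 ^ Suc m"] sum.cong) auto
    also have "\<dots> = (\<phi> (g (?l j)) + \<phi> (g (?r j))) / 2 ^ Suc m"
      using j by simp
    finally show ?thesis using bounded_linear.linear[OF \<phi>] by (simp add: linear_add)
  qed
  moreover obtain \<phi> :: "'a \<Rightarrow> real"
    where "bounded_linear \<phi>" "\<phi> (g (?l j) + g (?r j)) = norm (g (?l j) + g (?r j))"
    by (rule exists_norming_functional)
  ultimately have "g (?l j) + g (?r j) = 0" by (metis norm_eq_zero)
  then show ?thesis by (simp add: eq_neg_iff_add_eq_0 add.commute)
qed

section \<open>Uniform q-convexity\<close>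

lemma powr_le_powr_iff_base:
  fixes x y a :: real
  assumes "0 \<le> x" "0 \<le> y" "0 < a"
  shows "x powr a \<le> y powr a \<longleftrightarrow> x \<le> y"
  using assms powr_mono2[of a x y] powr_less_mono2[of a y x] by (auto simp: not_le[symmetric])

lemma le_mult_powr_inverse_iff:
  fixes a c d q :: real
  assumes "0 \<le> a" "0 \<le> d" "0 < c" "0 < q"
  shows "a \<le> c * d powr (1 / q) \<longleftrightarrow> a powr q \<le> c powr q * d"
proof -
  have "c * d powr (1 / q) = (c powr q * d) powr (1 / q)"
    using assms by (simp add: powr_mult powr_powr)
  moreover have "a \<le> (c powr q * d) powr (1 / q) \<longleftrightarrow> a powr q \<le> ((c powr q * d) powr (1 / q)) powr q"
    using assms by (simp add: powr_le_powr_iff_base)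
  ultimately show ?thesis using assms by (simp add: powr_powr)
qed

lemma powr_midpoint_le:
  fixes u v q :: real
  assumes "0 \<le> u" "0 \<le> v" "1 \<le> q"
  shows "((u + v) / 2) powr q \<le> (u powr q + v powr q) / 2"
proof (cases "u = 0 \<or> v = 0")
  case True
  then obtain w where w: "0 \<le> w" "u + v = w" "u powr q + v powr q = w powr q"
    using assms by auto
  have "2 powr 1 \<le> 2 powr q" using assms(3) by (intro powr_mono) auto
  then have "w powr q / 2 powr q \<le> w powr q / 2" by (intro divide_left_mono) auto
  then show ?thesis using w by (simp add: powr_divide)
next
  case False
  then have "u \<in> {0<..}" "v \<in> {0<..}" using assms by auto
  with convex_onD[OF powr_convex[OF assms(3)], of "1 / 2" u v]
  show ?thesis by (simp add: field_simps)
qed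

lemma norm_powr_le_mean_of_shifts:
  fixes x y :: "'a::real_normed_vector"
  assumes "1 \<le> q"
  shows "norm x powr q \<le> (norm (x + y) powr q + norm (x - y) powr q) / 2"
proof -
  have "(x + y) + (x - y) = 2 *\<^sub>R x" by (simp add: scaleR_2)
  then have "norm x \<le> (norm (x + y) + norm (x - y)) / 2"
    using norm_triangle_ineq[of "x + y" "x - y"] by simp
  then have "norm x powr q \<le> ((norm (x + y) + norm (x - y)) / 2) powr q"
    using assms by (intro powr_mono2) auto
  also have "\<dots> \<le> (norm (x + y) powr q + norm (x - y) powr q) / 2"
    using assms by (intro powr_midpoint_le) auto
  finally show ?thesis .
qed

text \<open>The defining inequality of uniform q-convexity, raised to the power \<open>q\<close> and written
  in terms of the midpoint \<open>x\<close> and the half-difference \<open>y\<close> of \<open>x\<^sub>+\<close> and \<open>x\<^sub>-\<close>.\<close>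

definition centered_q_convex ::
    "('a::real_normed_vector \<Rightarrow> 'b::real_normed_vector) \<Rightarrow> real \<Rightarrow> real \<Rightarrow> bool" where
  "centered_q_convex T q c \<longleftrightarrow>
    (\<forall>x y. norm (T y) powr q
      \<le> c powr q * ((norm (x + y) powr q + norm (x - y) powr q) / 2 - norm x powr q))"

lemma uniformly_q_convex_iff_centered:
  fixes T :: "'a::banach \<Rightarrow> 'b::banach"
  assumes T: "linear T" and q: "1 \<le> q" and c: "0 < c"
  shows "uniformly_q_convex T q c \<longleftrightarrow> centered_q_convex T q c"
proof -
  have centered: "norm ((1 / 2) *\<^sub>R (T (x + y) - T (x - y))) \<le>
        c * ((norm (x + y) powr q + norm (x - y) powr q) / 2
          - norm ((1 / 2) *\<^sub>R ((x + y) + (x - y))) powr q) powr (1 / q)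
      \<longleftrightarrow> norm (T y) powr q
        \<le> c powr q * ((norm (x + y) powr q + norm (x - y) powr q) / 2 - norm x powr q)"
    for x y
  proof -
    have "(1 / 2) *\<^sub>R (T (x + y) - T (x - y)) = T y"
      by (simp add: linear_add[OF T] linear_diff[OF T] flip: scaleR_2)
    moreover have "(1 / 2) *\<^sub>R ((x + y) + (x - y)) = x" by (simp flip: scaleR_2)
    ultimately show ?thesis
      using norm_powr_le_mean_of_shifts[OF q, of x y] c q by (simp add: le_mult_powr_inverse_iff)
  qed
  have shift_quantifiers: "(\<forall>xp xm. P xp xm) \<longleftrightarrow> (\<forall>x y. P (x + y) (x - y))"
    for P :: "'a \<Rightarrow> 'a \<Rightarrow> bool"
  proof (intro iffI allI)
    fix xp xm assume "\<forall>x y. P (x + y) (x - y)"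
    then have "P ((1 / 2) *\<^sub>R (xp + xm) + (1 / 2) *\<^sub>R (xp - xm))
        ((1 / 2) *\<^sub>R (xp + xm) - (1 / 2) *\<^sub>R (xp - xm))"
      by blast
    then show "P xp xm" by (simp add: algebra_simps flip: scaleR_2)
  qed simp
  show ?thesis
    unfolding uniformly_q_convex_def centered_q_convex_def
    by (subst shift_quantifiers) (simp only: centered)
qed

section \<open>Strong martingale cotype\<close>

lemma Lq_norm_powr:
  assumes "0 < q"
  shows "Lq_norm q f powr q = (LINT t:{0..<1}|lborel. norm (f t) powr q)"
proof -
  have "0 \<le> (LINT t:{0..<1}|lborel. norm (f t) powr q)"
    unfolding set_lebesgue_integral_def by (intro Bochner_Integration.integral_nonneg) simp
  then show ?thesis unfolding Lq_norm_def using assms by (simp add: powr_powr)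
qed

lemma moment_increment_ge:
  fixes T :: "'a::real_normed_vector \<Rightarrow> 'b::real_normed_vector" and f y :: "real \<Rightarrow> 'a"
  assumes T: "linear T" and convex: "centered_q_convex T q c"
    and f: "dyadic_step m f" and y: "dyadic_step (Suc m) y"
    and opposite: "\<And>j. j < 2 ^ m \<Longrightarrow> y (dyadic_point (Suc m) (2 * j + 1)) = - y (dyadic_point m j)"
  shows "(LINT t:{0..<1}|lborel. norm (T (y t)) powr q)
    \<le> c powr q * ((LINT t:{0..<1}|lborel. norm (f t + y t) powr q)
      - (LINT t:{0..<1}|lborel. norm (f t) powr q))"
proof -
  let ?l = "dyadic_point m" and ?r = "\<lambda>j. dyadic_point (Suc m) (2 * j + 1)"
  have f_right: "f (?r j) = f (?l j)" if "j < 2 ^ m" for j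
  proof -
    have "?r j \<in> {0..<1}" "?l j \<in> {0..<1}" using that by (intro dyadic_point_in_unit; simp)+
    then show ?thesis using f dyadic_index_right_child[of m j] unfolding dyadic_step_def by simp
  qed
  have "dyadic_step (Suc m) f" using dyadic_step_mono[OF f] by simp
  then have "dyadic_step (Suc m) (\<lambda>t. norm (f t + y t) powr q)"
    and "dyadic_step (Suc m) (\<lambda>t. norm (f t) powr q)"
    using dyadic_step_comp2[OF _ y, where h = "\<lambda>a b. norm (a + b) powr q"]
      dyadic_step_comp[where h = "\<lambda>a. norm a powr q"] by blast+
  moreover have "dyadic_step (Suc m) (\<lambda>t. norm (T (y t)) powr q)"
    by (rule dyadic_step_comp[OF y])
  ultimately have integrals:
    "(LINT t:{0..<1}|lborel. norm (T (y t)) powr q)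
       = (\<Sum>j<2 ^ m. 2 * norm (T (y (?l j))) powr q) / 2 ^ Suc m"
    "(LINT t:{0..<1}|lborel. norm (f t + y t) powr q)
       = (\<Sum>j<2 ^ m. norm (f (?l j) + y (?l j)) powr q + norm (f (?l j) - y (?l j)) powr q)
           / 2 ^ Suc m"
    "(LINT t:{0..<1}|lborel. norm (f t) powr q)
       = (\<Sum>j<2 ^ m. 2 * norm (f (?l j)) powr q) / 2 ^ Suc m"
    by (simp_all only: integral_dyadic_step_Suc)
      (auto intro!: arg_cong[where f = "\<lambda>x. x / 2 ^ Suc m"] sum.cong
        simp: opposite[simplified] f_right[simplified] linear_neg[OF T])
  let ?A = "\<Sum>j<2 ^ m. norm (f (?l j) + y (?l j)) powr q + norm (f (?l j) - y (?l j)) powr q"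
    and ?B = "\<Sum>j<2 ^ m. 2 * norm (f (?l j)) powr q"
  have "(\<Sum>j<2 ^ m. 2 * norm (T (y (?l j))) powr q)
      \<le> (\<Sum>j<2 ^ m. c powr q * ((norm (f (?l j) + y (?l j)) powr q
        + norm (f (?l j) - y (?l j)) powr q) - 2 * norm (f (?l j)) powr q))"
    using convex unfolding centered_q_convex_def by (intro sum_mono) (simp add: algebra_simps)
  also have "\<dots> = c powr q * (?A - ?B)"
    by (simp only: sum_subtractf flip: sum_distrib_left)
  finally have "(\<Sum>j<2 ^ m. 2 * norm (T (y (?l j))) powr q) / 2 ^ Suc m
      \<le> c powr q * (?A - ?B) / 2 ^ Suc m"
    by (rule divide_right_mono) simp
  then show ?thesis
    unfolding integrals times_divide_eq_right[symmetric] diff_divide_distrib .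
qed

lemma dyadic_mart_diff_step:
  assumes "dyadic_mart_diff n d" "k \<le> n"
  shows "dyadic_step k (d k)"
  using assms unfolding dyadic_mart_diff_def by (simp add: dyadic_step_if_measurable)

lemma dyadic_mart_diff_children_opposite:
  fixes d :: "nat \<Rightarrow> real \<Rightarrow> 'a::banach"
  assumes mart: "dyadic_mart_diff n d" and "m < n" and j: "j < 2 ^ m"
  shows "d (Suc m) (dyadic_point (Suc m) (2 * j + 1)) = - d (Suc m) (dyadic_point m j)"
proof (rule dyadic_children_opposite[OF _ j])
  show "dyadic_step (Suc m) (d (Suc m))" using dyadic_mart_diff_step[OF mart] \<open>m < n\<close> by simp
next
  fix \<phi> :: "'a \<Rightarrow> real" assume "bounded_linear \<phi>"
  then have "(LINT t:A|lborel. \<phi> (d k t)) = 0" if "k \<in> {1..n}" "A \<in> sets (dyF (k - 1))" for k A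
    using mart that unfolding dyadic_mart_diff_def by blast
  then show "(LINT t:dyadic_interval m j|lborel. \<phi> (d (Suc m) t)) = 0"
    using dyadic_interval_in_dyF[OF j] \<open>m < n\<close> by simp
qed

lemma strong_mart_cotype_if_centered_q_convex:
  fixes T :: "'a::banach \<Rightarrow> 'b::banach"
  assumes T: "linear T" and q: "0 < q" and c: "0 < c" and convex: "centered_q_convex T q c"
  shows "strong_mart_cotype T q c"
  unfolding strong_mart_cotype_def
proof (intro allI impI, elim conjE)
  fix n x and d :: "nat \<Rightarrow> real \<Rightarrow> 'a"
  assume mart: "dyadic_mart_diff n d" and d0: "\<forall>t\<in>{0..<1}. d 0 t = x"
  define F where "F k t = (\<Sum>l\<le>k. d l t)" for k t
  define N where "N k = (LINT t:{0..<1}|lborel. norm (F k t) powr q)" for k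
  define L where "L k = (LINT t:{0..<1}|lborel. norm (T (d k t)) powr q)" for k
  have F_step: "dyadic_step k (F k)" if "k \<le> n" for k
    unfolding F_def using that
    by (intro dyadic_step_sum dyadic_step_mono[OF dyadic_mart_diff_step[OF mart]]) auto
  have increment: "c powr (- q) * L k \<le> N k - N (k - 1)" if "k \<in> {1..n}" for k
  proof -
    obtain m where k: "k = Suc m" and "m < n" using \<open>k \<in> {1..n}\<close> by (cases k) auto
    have "dyadic_step m (F m)" "dyadic_step (Suc m) (d (Suc m))"
      using F_step dyadic_mart_diff_step[OF mart] \<open>m < n\<close> by auto
    from moment_increment_ge[OF T convex this dyadic_mart_diff_children_opposite[OF mart \<open>m < n\<close>]]
    have "L (Suc m) \<le> c powr q * (N (Suc m) - N m)"
      by (simp add: L_def N_def F_def)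
    then show ?thesis
      using c k by (simp add: powr_minus pos_divide_le_eq mult.commute flip: divide_inverse)
  qed
  have "N 0 = norm x powr q"
  proof -
    have "dyadic_step 0 (\<lambda>t. norm (F 0 t) powr q)" by (rule dyadic_step_comp[OF F_step]) simp
    then show ?thesis
      using d0 dyadic_point_in_unit[of 0 0] by (simp add: N_def F_def integral_dyadic_step)
  qed
  moreover have "c powr (- q) * (\<Sum>k\<in>{1..n}. L k) \<le> (\<Sum>k\<in>{1..n}. N k - N (k - 1))"
    unfolding sum_distrib_left by (rule sum_mono[OF increment])
  ultimately have "norm x powr q + c powr (- q) * (\<Sum>k\<in>{1..n}. L k) \<le> N n"
    using sum_telescope''[of 0 n N] by simp
  moreover have "0 \<le> L k" for k
    unfolding L_def set_lebesgue_integral_def by (intro Bochner_Integration.integral_nonneg) simp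
  ultimately have "(norm x powr q + c powr (- q) * (\<Sum>k\<in>{1..n}. L k)) powr (1 / q)
      \<le> N n powr (1 / q)"
    using q by (intro powr_mono2) (auto intro!: add_nonneg_nonneg mult_nonneg_nonneg sum_nonneg)
  then show "(norm x powr q
        + c powr (- q) * (\<Sum>k\<in>{1..n}. Lq_norm q (\<lambda>t. T (d k t)) powr q)) powr (1 / q)
      \<le> Lq_norm q (\<lambda>t. \<Sum>k\<le>n. d k t)"
    unfolding Lq_norm_powr[OF q] by (simp add: L_def N_def F_def Lq_norm_def)
qed

text \<open>Only the differences with index \<open>0\<close> and \<open>1\<close> matter: the one-step martingale is used
  with \<open>n = 1\<close>.\<close>

definition one_step_mart :: "'a \<Rightarrow> 'a \<Rightarrow> nat \<Rightarrow> real \<Rightarrow> 'a::real_normed_vector" where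
  "one_step_mart x y k t = (if k = 0 then x else if t < 1 / 2 then y else - y)"

lemma dyadic_step_one_step_mart: "dyadic_step (Suc 0) (one_step_mart x y 1)"
proof -
  have "t < 1 / 2 \<longleftrightarrow> dyadic_index 1 t = 0" if "t \<in> {0..<1}" for t
    using mem_dyadic_interval_iff[of t 1 0] that
    by (auto simp: dyadic_interval_def dyadic_point_def)
  then show ?thesis unfolding dyadic_step_def one_step_mart_def by auto
qed

lemma one_step_mart_children:
  "one_step_mart x y (Suc k) (dyadic_point 0 0) = y"
  "one_step_mart x y (Suc k) (dyadic_point (Suc 0) (Suc 0)) = - y"
  by (simp_all add: one_step_mart_def dyadic_point_def)

lemma dyadic_mart_diff_one_step_mart:
  fixes x y :: "'a::banach"
  shows "dyadic_mart_diff 1 (one_step_mart x y)"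
  unfolding dyadic_mart_diff_def
proof (intro conjI ballI allI impI)
  fix k :: nat assume "k \<le> 1"
  then consider "k = 0" | "k = 1" by linarith
  then show "one_step_mart x y k \<in> borel_measurable (dyF k)"
  proof cases
    case 1
    have "one_step_mart x y 0 = (\<lambda>t. x)" by (simp add: one_step_mart_def fun_eq_iff)
    then show ?thesis using 1 by simp
  next
    case 2
    have "{..<1 / 2} \<inter> space (dyF 1) = dyadic_interval 1 0"
      by (auto simp: dyadic_interval_def dyadic_point_def space_dyF)
    then have "{..<1 / 2} \<inter> space (dyF 1) \<in> sets (dyF 1)"
      using dyadic_interval_in_dyF[of 0 1] by simp
    from measurable_If_set[OF measurable_const[of y] measurable_const[of "- y"] this]
    show ?thesis unfolding 2 one_step_mart_def by simp
  qed
next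
  fix k A and \<phi> :: "'a \<Rightarrow> real"
  assume "k \<in> {1..1}" "A \<in> sets (dyF (k - 1))" "bounded_linear \<phi>"
  then have "k = 1" "A = {} \<or> A = {0..<1}" "linear \<phi>"
    by (auto simp: sets_dyF_0 bounded_linear.linear)
  then show "(LINT t:A|lborel. \<phi> (one_step_mart x y k t)) = 0"
    using integral_dyadic_step_Suc[OF dyadic_step_comp[OF dyadic_step_one_step_mart, of \<phi>]]
    by (auto simp: one_step_mart_children linear_neg set_lebesgue_integral_def)
qed

lemma centered_q_convex_if_strong_mart_cotype:
  fixes T :: "'a::banach \<Rightarrow> 'b::banach"
  assumes T: "linear T" and q: "0 < q" and c: "0 < c" and cotype: "strong_mart_cotype T q c"
  shows "centered_q_convex T q c"
  unfolding centered_q_convex_def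
proof (intro allI)
  fix x y :: 'a
  let ?d = "one_step_mart x y"
  have "\<forall>t\<in>{0..<1}. ?d 0 t = x" by (simp add: one_step_mart_def)
  then have "(norm x powr q + c powr (- q) * (\<Sum>k\<in>{1..1}. Lq_norm q (\<lambda>t. T (?d k t)) powr q))
        powr (1 / q)
      \<le> Lq_norm q (\<lambda>t. \<Sum>k\<le>1. ?d k t)"
    using cotype dyadic_mart_diff_one_step_mart unfolding strong_mart_cotype_def by blast
  moreover have "Lq_norm q (\<lambda>t. T (?d 1 t)) powr q = norm (T y) powr q"
    using integral_dyadic_step_Suc[OF dyadic_step_comp[OF dyadic_step_one_step_mart,
          of "\<lambda>v. norm (T v) powr q"]]
    by (simp add: Lq_norm_powr[OF q] one_step_mart_children linear_neg[OF T])
  moreover have "Lq_norm q (\<lambda>t. \<Sum>k\<le>1. ?d k t)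
      = ((norm (x + y) powr q + norm (x - y) powr q) / 2) powr (1 / q)"
  proof -
    have "(\<Sum>k\<le>1. ?d k t) = x + ?d 1 t" for t by (simp add: one_step_mart_def)
    moreover have "(LINT t:{0..<1}|lborel. norm (x + ?d 1 t) powr q)
        = (norm (x + y) powr q + norm (x - y) powr q) / 2"
      using integral_dyadic_step_Suc[OF dyadic_step_comp[OF dyadic_step_one_step_mart,
            of "\<lambda>v. norm (x + v) powr q"]]
      by (simp add: one_step_mart_children)
    ultimately show ?thesis unfolding Lq_norm_def by (simp only:)
  qed
  ultimately have "norm x powr q + c powr (- q) * norm (T y) powr q
      \<le> (norm (x + y) powr q + norm (x - y) powr q) / 2"
    using q by (simp add: powr_le_powr_iff_base)
  then show "norm (T y) powr q
      \<le> c powr q * ((norm (x + y) powr q + norm (x - y) powr q) / 2 - norm x powr q)"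
    using c by (simp add: powr_minus field_simps)
qed

theorem theorem1:
  fixes T :: "'a::banach \<Rightarrow> 'b::banach" and q c :: real
  assumes "bounded_linear T" and "q \<ge> 2" and "c > 0"
  shows "uniformly_q_convex T q c \<longleftrightarrow> strong_mart_cotype T q c"
proof -
  have T: "linear T" using \<open>bounded_linear T\<close> by (rule bounded_linear.linear)
  have "uniformly_q_convex T q c \<longleftrightarrow> centered_q_convex T q c"
    using assms T by (intro uniformly_q_convex_iff_centered) auto
  also have "\<dots> \<longleftrightarrow> strong_mart_cotype T q c"
    using assms T strong_mart_cotype_if_centered_q_convex[of T q c]
      centered_q_convex_if_strong_mart_cotype[of T q c]
    by auto
  finally show ?thesis .
qed

end
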